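(* Let $X,Y$ be finite sets. (1) For filtrations $F_X,F_Y$ over $X,Y$, $d_{\mathrm{B}}(\mathbf{mgm}(F_X),\mathbf{mgm}(F_Y))\leq d_{\mathrm{T}}(F_X,F_Y)$. (2) For phylogenetic networks $N_X,N_Y$ over $X,Y$ with Vietoris–Rips filtrations $\mathbf{VR}_X,\mathbf{VR}_Y$, $d_{\mathrm{B}}(\mathbf{mgm}(\mathbf{VR}_X),\mathbf{mgm}(\mathbf{VR}_Y))\leq d_{\mathrm{GH}}((X,N_X),(Y,N_Y))$.
   Context: Filtration over $X$: order-preserving $F_X$ from nonempty subsets of $X$ (under inclusion) to $\mathbb{R}$. Mergegram $\mathbf{mgm}(F_X)$: multiset of the nonempty intervals $I_\sigma=[F_X(\sigma),\min_{\sigma\subsetneq\tau\subset X}F_X(\tau))$ ($\min\emptyset=\infty$), one per nonempty $\sigma\subset X$. Bottleneck distance $d_{\mathrm{B}}$ between multisets of intervals $[a,b)$ ($b\in\mathbb{R}\cup\{\infty\}$): infimum of $\varepsilon$ admitting a partial bijection with matched endpoints differing by at most $\varepsilon$ in each coordinate ($|\infty-\infty|=0$) and unmatched intervals of length at most $2\varepsilon$. Pullback along a surjection $\varphi:Z\twoheadrightarrow X$: $\varphi^*F_X(\kappa)=F_X(\varphi(\kappa))$. Tripod distance: $d_{\mathrm{T}}(F_X,F_Y):=\inf\max_{\emptyset\neq\kappa\subset Z}|\varphi_X^*F_X(\kappa)-\varphi_Y^*F_Y(\kappa)|$ over finite sets $Z$ and surjections $\varphi_X:Z\twoheadrightarrow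 X$, $\varphi_Y:Z\twoheadrightarrow Y$. A phylogenetic network over $X$ is $N_X:X\times X\to\mathbb{R}$, symmetric, with $\max\{N_X(x,x),N_X(x',x')\}\leq N_X(x,x')$; $\mathbf{VR}_X(\sigma):=\max_{x,x'\in\sigma}N_X(x,x')$. $d_{\mathrm{GH}}((X,N_X),(Y,N_Y)):=\inf\max_{z,z'\in Z}|N_X(\varphi_X(z),\varphi_X(z'))-N_Y(\varphi_Y(z),\varphi_Y(z'))|$ over the same tripods. *)

theory Defs
  imports Complex_Main "HOL-Library.Multiset" "HOL-Library.Extended_Real"
begin

text \<open>Intervals [a,b) with a real, b real or infinity, encoded as pairs (a, b) :: real \<times> ereal.\<close>
type_synonym interval = "real \<times> ereal"

definition filtration :: "'a set \<Rightarrow> ('a set \<Rightarrow> real) \<Rightarrow> bool" where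
  "filtration X F \<longleftrightarrow>
     (\<forall>\<sigma> \<tau>. \<sigma> \<noteq> {} \<and> \<sigma> \<subseteq> \<tau> \<and> \<tau> \<subseteq> X \<longrightarrow> F \<sigma> \<le> F \<tau>)"

text \<open>Death time: min over strict supersets within X, min of empty set is infinity.\<close>
definition death :: "'a set \<Rightarrow> ('a set \<Rightarrow> real) \<Rightarrow> 'a set \<Rightarrow> ereal" where
  "death X F \<sigma> = Inf ((\<lambda>\<tau>. ereal (F \<tau>)) ` {\<tau>. \<sigma> \<subset> \<tau> \<and> \<tau> \<subseteq> X})"

definition interval_of :: "'a set \<Rightarrow> ('a set \<Rightarrow> real) \<Rightarrow> 'a set \<Rightarrow> interval" where
  "interval_of X F \<sigma> = (F \<sigma>, death X F \<sigma>)"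

definition mgm :: "'a set \<Rightarrow> ('a set \<Rightarrow> real) \<Rightarrow> interval multiset" where
  "mgm X F = filter_mset (\<lambda>(a, b). ereal a < b)
      (image_mset (interval_of X F) (mset_set {\<sigma>. \<sigma> \<subseteq> X \<and> \<sigma> \<noteq> {}}))"

definition end_close :: "ereal \<Rightarrow> ereal \<Rightarrow> real \<Rightarrow> bool" where
  "end_close b b' \<epsilon> \<longleftrightarrow>
     (b = \<infinity> \<and> b' = \<infinity>) \<or>
     (\<exists>r r'. b = ereal r \<and> b' = ereal r' \<and> \<bar>r - r'\<bar> \<le> \<epsilon>)"

text \<open>A partial bijection between multisets A and B: a multiset M of matched pairs.\<close>
definition eps_matching :: "real \<Rightarrow> interval multiset \<Rightarrow> interval multiset \<Rightarrow> (interval \<times> interval) multiset \<Rightarrow> bool" where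
  "eps_matching \<epsilon> A B M \<longleftrightarrow>
     image_mset fst M \<subseteq># A \<and> image_mset snd M \<subseteq># B \<and>
     (\<forall>((a, b), (a', b')) \<in># M. \<bar>a - a'\<bar> \<le> \<epsilon> \<and> end_close b b' \<epsilon>) \<and>
     (\<forall>(a, b) \<in># A - image_mset fst M. b - ereal a \<le> ereal (2 * \<epsilon>)) \<and>
     (\<forall>(a, b) \<in># B - image_mset snd M. b - ereal a \<le> ereal (2 * \<epsilon>))"

definition bottleneck :: "interval multiset \<Rightarrow> interval multiset \<Rightarrow> ereal" where
  "bottleneck A B = Inf {ereal \<epsilon> | \<epsilon>. \<epsilon> \<ge> 0 \<and> (\<exists>M. eps_matching \<epsilon> A B M)}"

text \<open>Tripod distance; tripods Z are finite sets of naturals (every finite set is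
  in bijection with one), with surjections onto X and Y.\<close>
definition tripod_dist :: "'a set \<Rightarrow> ('a set \<Rightarrow> real) \<Rightarrow> 'b set \<Rightarrow> ('b set \<Rightarrow> real) \<Rightarrow> ereal" where
  "tripod_dist X FX Y FY = Inf {ereal (Max {\<bar>FX (\<phi>X ` \<kappa>) - FY (\<phi>Y ` \<kappa>)\<bar> | \<kappa>. \<kappa> \<subseteq> Z \<and> \<kappa> \<noteq> {}})
      | (Z :: nat set) \<phi>X \<phi>Y. finite Z \<and> \<phi>X ` Z = X \<and> \<phi>Y ` Z = Y}"

definition phylo_network :: "'a set \<Rightarrow> ('a \<Rightarrow> 'a \<Rightarrow> real) \<Rightarrow> bool" where
  "phylo_network X N \<longleftrightarrow>
     (\<forall>x\<in>X. \<forall>x'\<in>X. N x x' = N x' x \<and> max (N x x) (N x' x') \<le> N x x')"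

definition VR :: "('a \<Rightarrow> 'a \<Rightarrow> real) \<Rightarrow> 'a set \<Rightarrow> real" where
  "VR N \<sigma> = Max {N x x' | x x'. x \<in> \<sigma> \<and> x' \<in> \<sigma>}"

definition gh_dist :: "'a set \<Rightarrow> ('a \<Rightarrow> 'a \<Rightarrow> real) \<Rightarrow> 'b set \<Rightarrow> ('b \<Rightarrow> 'b \<Rightarrow> real) \<Rightarrow> ereal" where
  "gh_dist X NX Y NY = Inf {ereal (Max {\<bar>NX (\<phi>X z) (\<phi>X z') - NY (\<phi>Y z) (\<phi>Y z')\<bar> | z z'. z \<in> Z \<and> z' \<in> Z})
      | (Z :: nat set) \<phi>X \<phi>Y. finite Z \<and> \<phi>X ` Z = X \<and> \<phi>Y ` Z = Y}"

end

theory Submission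
  imports Defs
begin

text \<open>Pulled back along surjections from a common finite set Z, filtrations keep their
  mergegrams: a subset of Z carries a nonempty bar only if it is the full preimage of its image,
  and on full preimages births and deaths are those of the original filtration. On the common
  vertex set Z, two filtrations within \<epsilon> of each other have mergegrams matched subset by subset:
  deaths are minima over the same strict supersets, hence \<epsilon>-close, and a bar that is empty for
  one filtration has length at most 2\<epsilon> for the other. For Vietoris-Rips filtrations the
  pointwise difference on Z is bounded by the distortion of the tripod.\<close>

definition mgm_index :: "'a set \<Rightarrow> ('a set \<Rightarrow> real) \<Rightarrow> 'a set set" where
  "mgm_index X F = {\<sigma>. \<sigma> \<subseteq> X \<and> \<sigma> \<noteq> {} \<and> ereal (F \<sigma>) < death X F \<sigma>}"

definition pullback :: "('c \<Rightarrow> 'a) \<Rightarrow> ('a set \<Rightarrow> real) \<Rightarrow> 'c set \<Rightarrow> real" where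
  "pullback \<phi> F \<kappa> = F (\<phi> ` \<kappa>)"

lemma finite_mgm_index: "finite X \<Longrightarrow> finite (mgm_index X F)"
  unfolding mgm_index_def by (rule finite_subset[of _ "Pow X"]) auto

lemma mgm_eq_image_mgm_index:
  assumes "finite X"
  shows "mgm X F = image_mset (interval_of X F) (mset_set (mgm_index X F))"
  using assms unfolding mgm_def mgm_index_def
  by (simp add: filter_mset_image_mset interval_of_def)

lemma death_le:
  assumes "\<sigma> \<subset> \<tau>" "\<tau> \<subseteq> X"
  shows "death X F \<sigma> \<le> ereal (F \<tau>)"
  unfolding death_def using assms by (intro Inf_lower) auto

lemma death_whole: "death X F X = \<infinity>"
proof -
  have "{\<tau>. X \<subset> \<tau> \<and> \<tau> \<subseteq> X} = {}" by auto
  then show ?thesis unfolding death_def by (simp only: image_empty Inf_empty top_ereal_def)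
qed

lemma death_attained:
  assumes "finite X" "\<sigma> \<subset> X"
  obtains \<tau> where "\<sigma> \<subset> \<tau>" "\<tau> \<subseteq> X" "death X F \<sigma> = ereal (F \<tau>)"
proof -
  let ?T = "{\<tau>. \<sigma> \<subset> \<tau> \<and> \<tau> \<subseteq> X}"
  have "finite ?T" by (rule finite_subset[of _ "Pow X"]) (auto simp: assms(1))
  moreover have "X \<in> ?T" using assms(2) by simp
  ultimately have "death X F \<sigma> \<in> (\<lambda>\<tau>. ereal (F \<tau>)) ` ?T"
    unfolding death_def by (intro finite_Inf_in) (auto simp: inf_min min_def)
  then show thesis using that by blast
qed

lemma end_close_death:
  assumes "finite Z" "\<kappa> \<subseteq> Z" "\<kappa> \<noteq> {}"
    and close: "\<And>\<kappa>. \<kappa> \<subseteq> Z \<Longrightarrow> \<kappa> \<noteq> {} \<Longrightarrow> \<bar>G \<kappa> - H \<kappa>\<bar> \<le> \<epsilon>"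
  shows "end_close (death Z G \<kappa>) (death Z H \<kappa>) \<epsilon>"
proof (cases "\<kappa> = Z")
  case True
  then show ?thesis by (simp add: end_close_def death_whole)
next
  case False
  with assms(2) have "\<kappa> \<subset> Z" by blast
  obtain s where s: "\<kappa> \<subset> s" "s \<subseteq> Z" "death Z G \<kappa> = ereal (G s)"
    using death_attained[OF assms(1) \<open>\<kappa> \<subset> Z\<close>] .
  obtain t where t: "\<kappa> \<subset> t" "t \<subseteq> Z" "death Z H \<kappa> = ereal (H t)"
    using death_attained[OF assms(1) \<open>\<kappa> \<subset> Z\<close>] .
  have "G s \<le> G t" using death_le[OF t(1,2), of G] s(3) by simp
  moreover have "H t \<le> H s" using death_le[OF s(1,2), of H] t(3) by simp
  moreover have "\<bar>G s - H s\<bar> \<le> \<epsilon>" "\<bar>G t - H t\<bar> \<le> \<epsilon>"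
    using close s(1,2) t(1,2) by blast+
  ultimately have "\<bar>G s - H t\<bar> \<le> \<epsilon>" by linarith
  then show ?thesis unfolding end_close_def s(3) t(3) by blast
qed

lemma bar_length_le_if_not_mgm_index:
  assumes "finite Z" "\<kappa> \<subseteq> Z" "\<kappa> \<noteq> {}"
    and close: "\<And>\<kappa>. \<kappa> \<subseteq> Z \<Longrightarrow> \<kappa> \<noteq> {} \<Longrightarrow> \<bar>G \<kappa> - H \<kappa>\<bar> \<le> \<epsilon>"
    and "\<kappa> \<notin> mgm_index Z H"
  shows "death Z G \<kappa> - ereal (G \<kappa>) \<le> ereal (2 * \<epsilon>)"
proof -
  have dead: "death Z H \<kappa> \<le> ereal (H \<kappa>)"
    using assms(2,3,5) by (simp add: mgm_index_def not_less)
  then have "\<kappa> \<noteq> Z" by (auto simp: death_whole)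
  with assms(2) have "\<kappa> \<subset> Z" by blast
  then obtain t where t: "\<kappa> \<subset> t" "t \<subseteq> Z" "death Z H \<kappa> = ereal (H t)"
    using death_attained[OF assms(1)] by blast
  have "death Z G \<kappa> \<le> ereal (G t)" using death_le[OF t(1,2)] .
  moreover have "G t \<le> H t + \<epsilon>" using close[OF t(2)] t(1) by fastforce
  moreover have "H t \<le> H \<kappa>" using dead t(3) by simp
  moreover have "H \<kappa> \<le> G \<kappa> + \<epsilon>" using close[OF assms(2,3)] by linarith
  ultimately have "death Z G \<kappa> \<le> ereal (G \<kappa> + 2 * \<epsilon>)" by (simp add: order_trans)
  then show ?thesis by (simp add: ereal_minus_le_iff add.commute)
qed

lemma image_mset_mset_set_diff:
  assumes "finite A" "C \<subseteq> A"
  shows "image_mset f (mset_set A) - image_mset f (mset_set C) = image_mset f (mset_set (A - C))"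
  using assms by (simp add: mset_set_Diff image_mset_Diff subset_imp_msubset_mset_set)

lemma eps_matching_mgm_if_close:
  assumes Z: "finite Z"
    and close: "\<And>\<kappa>. \<kappa> \<subseteq> Z \<Longrightarrow> \<kappa> \<noteq> {} \<Longrightarrow> \<bar>G \<kappa> - H \<kappa>\<bar> \<le> \<epsilon>"
  shows "\<exists>M. eps_matching \<epsilon> (mgm Z G) (mgm Z H) M"
proof -
  define A where "A = mgm_index Z G"
  define B where "B = mgm_index Z H"
  define M where
    "M = image_mset (\<lambda>\<kappa>. (interval_of Z G \<kappa>, interval_of Z H \<kappa>)) (mset_set (A \<inter> B))"
  have fin: "finite A" "finite B" using Z by (simp_all add: A_def B_def finite_mgm_index)
  have A: "\<kappa> \<subseteq> Z" "\<kappa> \<noteq> {}" if "\<kappa> \<in> A" for \<kappa> using that by (simp_all add: A_def mgm_index_def)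
  have B: "\<kappa> \<subseteq> Z" "\<kappa> \<noteq> {}" if "\<kappa> \<in> B" for \<kappa> using that by (simp_all add: B_def mgm_index_def)
  have close': "\<And>\<kappa>. \<kappa> \<subseteq> Z \<Longrightarrow> \<kappa> \<noteq> {} \<Longrightarrow> \<bar>H \<kappa> - G \<kappa>\<bar> \<le> \<epsilon>"
    using close by (simp add: abs_minus_commute)
  have fst_M: "image_mset fst M = image_mset (interval_of Z G) (mset_set (A \<inter> B))"
    and snd_M: "image_mset snd M = image_mset (interval_of Z H) (mset_set (A \<inter> B))"
    by (simp_all add: M_def multiset.map_comp o_def)
  have "eps_matching \<epsilon> (mgm Z G) (mgm Z H) M"
    unfolding eps_matching_def mgm_eq_image_mgm_index[OF Z] A_def[symmetric] B_def[symmetric]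
      fst_M snd_M image_mset_mset_set_diff[OF fin(1) Int_lower1]
      image_mset_mset_set_diff[OF fin(2) Int_lower2]
  proof (intro conjI)
    show "image_mset (interval_of Z G) (mset_set (A \<inter> B))
        \<subseteq># image_mset (interval_of Z G) (mset_set A)"
      "image_mset (interval_of Z H) (mset_set (A \<inter> B))
        \<subseteq># image_mset (interval_of Z H) (mset_set B)"
      using fin by (auto intro!: image_mset_subseteq_mono subset_imp_msubset_mset_set)
    show "\<forall>((a, b), a', b') \<in># M. \<bar>a - a'\<bar> \<le> \<epsilon> \<and> end_close b b' \<epsilon>"
      using fin B close end_close_death[where G = G and H = H, OF Z _ _ close]
      by (auto simp: M_def interval_of_def)
    show "\<forall>(a, b) \<in># image_mset (interval_of Z G) (mset_set (A - A \<inter> B)).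
        b - ereal a \<le> ereal (2 * \<epsilon>)"
    proof -
      have "death Z G \<kappa> - ereal (G \<kappa>) \<le> ereal (2 * \<epsilon>)" if "\<kappa> \<in> A - A \<inter> B" for \<kappa>
        using that A[of \<kappa>]
        by (intro bar_length_le_if_not_mgm_index[OF Z _ _ close]) (auto simp: B_def)
      then show ?thesis using fin(1) by (auto simp: interval_of_def)
    qed
    show "\<forall>(a, b) \<in># image_mset (interval_of Z H) (mset_set (B - A \<inter> B)).
        b - ereal a \<le> ereal (2 * \<epsilon>)"
    proof -
      have "death Z H \<kappa> - ereal (H \<kappa>) \<le> ereal (2 * \<epsilon>)" if "\<kappa> \<in> B - A \<inter> B" for \<kappa>
        using that B[of \<kappa>]
        by (intro bar_length_le_if_not_mgm_index[OF Z _ _ close']) (auto simp: A_def)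
      then show ?thesis using fin(2) by (auto simp: interval_of_def)
    qed
  qed
  then show ?thesis by blast
qed

lemma image_preimage_eq: "\<sigma> \<subseteq> \<phi> ` Z \<Longrightarrow> \<phi> ` (Z \<inter> \<phi> -` \<sigma>) = \<sigma>"
  by blast

lemma image_strict_supersets_preimage:
  assumes "\<phi> ` Z = X" "\<sigma> \<subseteq> X"
  shows "image \<phi> ` {\<tau>. Z \<inter> \<phi> -` \<sigma> \<subset> \<tau> \<and> \<tau> \<subseteq> Z} = {\<tau>. \<sigma> \<subset> \<tau> \<and> \<tau> \<subseteq> X}"
proof (intro equalityI subsetI)
  fix \<rho> assume "\<rho> \<in> image \<phi> ` {\<tau>. Z \<inter> \<phi> -` \<sigma> \<subset> \<tau> \<and> \<tau> \<subseteq> Z}"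
  then obtain \<tau> where \<tau>: "Z \<inter> \<phi> -` \<sigma> \<subset> \<tau>" "\<tau> \<subseteq> Z" "\<rho> = \<phi> ` \<tau>" by blast
  then obtain z where "z \<in> \<tau>" "\<phi> z \<notin> \<sigma>" by blast
  then have "\<rho> \<noteq> \<sigma>" using \<tau>(3) by blast
  moreover have "\<sigma> \<subseteq> \<rho>" using \<tau> assms image_preimage_eq[of \<sigma> \<phi> Z] by blast
  ultimately show "\<rho> \<in> {\<tau>. \<sigma> \<subset> \<tau> \<and> \<tau> \<subseteq> X}" using \<tau> assms(1) by blast
next
  fix \<rho> assume "\<rho> \<in> {\<tau>. \<sigma> \<subset> \<tau> \<and> \<tau> \<subseteq> X}"
  then have \<rho>: "\<sigma> \<subset> \<rho>" "\<rho> \<subseteq> X" by auto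
  then have "Z \<inter> \<phi> -` \<sigma> \<subset> Z \<inter> \<phi> -` \<rho>" using assms(1) by blast
  moreover have "\<rho> = \<phi> ` (Z \<inter> \<phi> -` \<rho>)" using \<rho>(2) assms(1) by blast
  ultimately show "\<rho> \<in> image \<phi> ` {\<tau>. Z \<inter> \<phi> -` \<sigma> \<subset> \<tau> \<and> \<tau> \<subseteq> Z}" by blast
qed

lemma death_pullback_preimage:
  assumes "\<phi> ` Z = X" "\<sigma> \<subseteq> X"
  shows "death Z (pullback \<phi> F) (Z \<inter> \<phi> -` \<sigma>) = death X F \<sigma>"
  unfolding death_def pullback_def image_image[of "\<lambda>\<tau>. ereal (F \<tau>)" "image \<phi>", symmetric]
    image_strict_supersets_preimage[OF assms] ..

lemma interval_of_pullback_preimage: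
  assumes "\<phi> ` Z = X" "\<sigma> \<subseteq> X"
  shows "interval_of Z (pullback \<phi> F) (Z \<inter> \<phi> -` \<sigma>) = interval_of X F \<sigma>"
  using assms by (simp add: interval_of_def death_pullback_preimage pullback_def image_preimage_eq)

text \<open>A set \<kappa> \<subseteq> Z that is not a full preimage dies at birth: its saturation is a strict
  superset on which the pullback takes the same value.\<close>

lemma mgm_index_pullback:
  assumes sur: "\<phi> ` Z = X"
  shows "mgm_index Z (pullback \<phi> F) = (\<lambda>\<sigma>. Z \<inter> \<phi> -` \<sigma>) ` mgm_index X F"
proof (intro equalityI subsetI)
  fix \<kappa> assume \<kappa>: "\<kappa> \<in> mgm_index Z (pullback \<phi> F)"
  then have \<kappa>Z: "\<kappa> \<subseteq> Z" "\<kappa> \<noteq> {}" by (simp_all add: mgm_index_def)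
  have saturated: "\<kappa> = Z \<inter> \<phi> -` (\<phi> ` \<kappa>)"
  proof (rule ccontr)
    assume "\<kappa> \<noteq> Z \<inter> \<phi> -` (\<phi> ` \<kappa>)"
    then have "\<kappa> \<subset> Z \<inter> \<phi> -` (\<phi> ` \<kappa>)" using \<kappa>Z by blast
    then have "death Z (pullback \<phi> F) \<kappa> \<le> ereal (pullback \<phi> F \<kappa>)"
      using death_le[of \<kappa> "Z \<inter> \<phi> -` (\<phi> ` \<kappa>)" Z "pullback \<phi> F"] \<kappa>Z
      by (simp add: pullback_def image_preimage_eq image_mono)
    then show False using \<kappa> by (simp add: mgm_index_def not_less[symmetric])
  qed
  have "\<phi> ` \<kappa> \<subseteq> X" using \<kappa>Z sur by blast
  then have "\<phi> ` \<kappa> \<in> mgm_index X F"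
    using \<kappa> \<kappa>Z death_pullback_preimage[OF sur, of "\<phi> ` \<kappa>" F]
    by (simp add: mgm_index_def pullback_def flip: saturated)
  with saturated show "\<kappa> \<in> (\<lambda>\<sigma>. Z \<inter> \<phi> -` \<sigma>) ` mgm_index X F" by blast
next
  fix \<kappa> assume "\<kappa> \<in> (\<lambda>\<sigma>. Z \<inter> \<phi> -` \<sigma>) ` mgm_index X F"
  then obtain \<sigma> where \<sigma>: "\<sigma> \<in> mgm_index X F" "\<kappa> = Z \<inter> \<phi> -` \<sigma>" by blast
  then have "\<sigma> \<subseteq> X" "\<sigma> \<noteq> {}" by (simp_all add: mgm_index_def)
  then show "\<kappa> \<in> mgm_index Z (pullback \<phi> F)"
    using \<sigma> sur interval_of_pullback_preimage[OF sur \<open>\<sigma> \<subseteq> X\<close>, of F]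
    by (auto simp: mgm_index_def interval_of_def)
qed

lemma mgm_pullback:
  assumes Z: "finite Z" and sur: "\<phi> ` Z = X"
  shows "mgm Z (pullback \<phi> F) = mgm X F"
proof -
  have X: "finite X" using Z sur by blast
  have "inj_on (\<lambda>\<sigma>. Z \<inter> \<phi> -` \<sigma>) (mgm_index X F)"
    by (rule inj_on_inverseI[of _ "image \<phi>"]) (use sur in \<open>auto simp: mgm_index_def\<close>)
  then have "mgm Z (pullback \<phi> F)
      = image_mset (\<lambda>\<sigma>. interval_of Z (pullback \<phi> F) (Z \<inter> \<phi> -` \<sigma>)) (mset_set (mgm_index X F))"
    by (simp add: mgm_eq_image_mgm_index[OF Z] mgm_index_pullback[OF sur]
        image_mset_mset_set[symmetric] multiset.map_comp o_def)
  also have "\<dots> = mgm X F"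
    using finite_mgm_index[OF X]
    by (auto simp: mgm_eq_image_mgm_index[OF X] mgm_index_def interval_of_pullback_preimage[OF sur]
        intro!: image_mset_cong)
  finally show ?thesis .
qed

lemma bottleneck_le_if_tripod_close:
  assumes Z: "finite Z" and "\<phi> ` Z = X" "\<psi> ` Z = Y" and "\<epsilon> \<ge> 0"
    and close: "\<And>\<kappa>. \<kappa> \<subseteq> Z \<Longrightarrow> \<kappa> \<noteq> {} \<Longrightarrow> \<bar>FX (\<phi> ` \<kappa>) - FY (\<psi> ` \<kappa>)\<bar> \<le> \<epsilon>"
  shows "bottleneck (mgm X FX) (mgm Y FY) \<le> ereal \<epsilon>"
proof -
  have "\<bar>pullback \<phi> FX \<kappa> - pullback \<psi> FY \<kappa>\<bar> \<le> \<epsilon>" if "\<kappa> \<subseteq> Z" "\<kappa> \<noteq> {}" for \<kappa>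
    using close[OF that] by (simp add: pullback_def)
  then obtain M where "eps_matching \<epsilon> (mgm Z (pullback \<phi> FX)) (mgm Z (pullback \<psi> FY)) M"
    using eps_matching_mgm_if_close[OF Z] by blast
  then have "eps_matching \<epsilon> (mgm X FX) (mgm Y FY) M"
    by (simp add: mgm_pullback assms)
  then show ?thesis unfolding bottleneck_def using \<open>\<epsilon> \<ge> 0\<close> by (intro Inf_lower) blast
qed

lemma bottleneck_le_tripod_dist:
  assumes "X \<noteq> {}"
  shows "bottleneck (mgm X FX) (mgm Y FY) \<le> tripod_dist X FX Y FY"
  unfolding tripod_dist_def
proof (rule Inf_greatest, elim CollectE exE conjE)
  fix e and Z :: "nat set" and \<phi> \<psi>
  assume e: "e = ereal (Max {\<bar>FX (\<phi> ` \<kappa>) - FY (\<psi> ` \<kappa>)\<bar> | \<kappa>. \<kappa> \<subseteq> Z \<and> \<kappa> \<noteq> {}})"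
    and Z: "finite Z" "\<phi> ` Z = X" "\<psi> ` Z = Y"
  define K where "K = {\<kappa>. \<kappa> \<subseteq> Z \<and> \<kappa> \<noteq> {}}"
  define d where "d \<kappa> = \<bar>FX (\<phi> ` \<kappa>) - FY (\<psi> ` \<kappa>)\<bar>" for \<kappa>
  have "finite K" using Z(1) by (simp add: K_def)
  then have bound: "d \<kappa> \<le> Max (d ` K)" if "\<kappa> \<in> K" for \<kappa> using that by simp
  have "Z \<in> K" using Z(2) assms by (auto simp: K_def)
  then have "0 \<le> Max (d ` K)" using bound[of Z] by (simp add: d_def order_trans)
  moreover have "{d \<kappa> | \<kappa>. \<kappa> \<subseteq> Z \<and> \<kappa> \<noteq> {}} = d ` K" by (auto simp: K_def)
  ultimately show "bottleneck (mgm X FX) (mgm Y FY) \<le> e" unfolding e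
    using bound by (intro bottleneck_le_if_tripod_close[OF Z]) (auto simp: K_def d_def)
qed

lemma VR_image: "VR N (\<phi> ` \<kappa>) = Max ((\<lambda>(z, z'). N (\<phi> z) (\<phi> z')) ` (\<kappa> \<times> \<kappa>))"
  unfolding VR_def by (rule arg_cong[where f = Max]) auto

lemma abs_Max_image_diff_le:
  fixes f g :: "'a \<Rightarrow> real"
  assumes "finite S" "S \<noteq> {}" and close: "\<And>s. s \<in> S \<Longrightarrow> \<bar>f s - g s\<bar> \<le> \<epsilon>"
  shows "\<bar>Max (f ` S) - Max (g ` S)\<bar> \<le> \<epsilon>"
proof -
  have "Max (f ` S) \<in> f ` S" "Max (g ` S) \<in> g ` S" using assms(1,2) by simp_all
  then obtain s t where s: "s \<in> S" "Max (f ` S) = f s" and t: "t \<in> S" "Max (g ` S) = g t"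
    by (metis imageE)
  have "g s \<le> Max (g ` S)" "f t \<le> Max (f ` S)" using assms(1) s(1) t(1) by simp_all
  then show ?thesis using close[OF s(1)] close[OF t(1)] s(2) t(2) by linarith
qed

lemma bottleneck_le_gh_dist:
  assumes "X \<noteq> {}"
  shows "bottleneck (mgm X (VR NX)) (mgm Y (VR NY)) \<le> gh_dist X NX Y NY"
  unfolding gh_dist_def
proof (rule Inf_greatest, elim CollectE exE conjE)
  fix e and Z :: "nat set" and \<phi> \<psi>
  assume e: "e = ereal (Max {\<bar>NX (\<phi> z) (\<phi> z') - NY (\<psi> z) (\<psi> z')\<bar> | z z'. z \<in> Z \<and> z' \<in> Z})"
    and Z: "finite Z" "\<phi> ` Z = X" "\<psi> ` Z = Y"
  define d where "d = (\<lambda>(z, z'). \<bar>NX (\<phi> z) (\<phi> z') - NY (\<psi> z) (\<psi> z')\<bar>)"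
  have "finite (Z \<times> Z)" using Z(1) by simp
  then have bound: "d p \<le> Max (d ` (Z \<times> Z))" if "p \<in> Z \<times> Z" for p using that by simp
  obtain z0 where "z0 \<in> Z" using Z(2) assms by blast
  then have "0 \<le> Max (d ` (Z \<times> Z))" using bound[of "(z0, z0)"] by (simp add: d_def order_trans)
  moreover have "{\<bar>NX (\<phi> z) (\<phi> z') - NY (\<psi> z) (\<psi> z')\<bar> | z z'. z \<in> Z \<and> z' \<in> Z} = d ` (Z \<times> Z)"
    by (auto simp: d_def)
  moreover have "\<bar>VR NX (\<phi> ` \<kappa>) - VR NY (\<psi> ` \<kappa>)\<bar> \<le> Max (d ` (Z \<times> Z))"
    if "\<kappa> \<subseteq> Z" "\<kappa> \<noteq> {}" for \<kappa>
    unfolding VR_image using that finite_subset[OF that(1) Z(1)] bound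
    by (intro abs_Max_image_diff_le) (auto simp: d_def)
  ultimately show "bottleneck (mgm X (VR NX)) (mgm Y (VR NY)) \<le> e"
    unfolding e by (intro bottleneck_le_if_tripod_close[OF Z]) auto
qed

text \<open>Only X \<noteq> {} is used: finiteness of X and Y follows from that of the tripods, and the
  bounds hold for arbitrary set functions and real matrices, not only for filtrations and
  phylogenetic networks.\<close>

theorem mainTheorem16:
  fixes X :: "'a set" and Y :: "'b set"
  assumes "finite X" "finite Y" "X \<noteq> {}" "Y \<noteq> {}"
  shows "(\<forall>FX FY. filtration X FX \<and> filtration Y FY \<longrightarrow>
            bottleneck (mgm X FX) (mgm Y FY) \<le> tripod_dist X FX Y FY)
       \<and> (\<forall>NX NY. phylo_network X NX \<and> phylo_network Y NY \<longrightarrow>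
            bottleneck (mgm X (VR NX)) (mgm Y (VR NY)) \<le> gh_dist X NX Y NY)"
  using bottleneck_le_tripod_dist[OF \<open>X \<noteq> {}\<close>] bottleneck_le_gh_dist[OF \<open>X \<noteq> {}\<close>] by blast

end
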